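(* Let $\mathbb{F}$ be a field, let $B_1,\dots,B_d$ be $n\times n$ matrices, $P=B_1\boxtimes\cdots\boxtimes B_d$, and let $M$ be an $n^d\times n^d$ matrix. Then for every $\kappa\subseteq[d]$, \[(PM)^{\top_\kappa}=L\,M^{\top_\kappa}R,\qquad L=\mathop{\boxtimes}_{k=1}^d L_k,\ \ R=\mathop{\boxtimes}_{k=1}^d R_k,\] where $L_k=I_n$, $R_k=B_k^{\mathsf T}$ if $k\in\kappa$, and $L_k=B_k$, $R_k=I_n$ if $k\notin\kappa$. Moreover, if $B_1,\dots,B_d$ are nonsingular then $\mathrm{rank}((PM)^{\top_\kappa})=\mathrm{rank}(M^{\top_\kappa})$.
   Context: $\boxtimes$ is the Kronecker product; rows and columns of $n^d\times n^d$ matrices are indexed by $[n]^d$ consistently with the Kronecker product. For $k\in[d]$, $M^{\top_k}$ swaps the $k$-th row index with the $k$-th column index; $M^{\top_\kappa}$ composes these over $k\in\kappa$. *)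

theory Defs
  imports "Jordan_Normal_Form.DL_Rank"
begin

definition kron :: "'a::times mat \<Rightarrow> 'a mat \<Rightarrow> 'a mat" where
  "kron A B = mat (dim_row A * dim_row B) (dim_col A * dim_col B)
     (\<lambda>(i, j). A $$ (i div dim_row B, j div dim_col B) * B $$ (i mod dim_row B, j mod dim_col B))"

definition kron_prod :: "nat \<Rightarrow> (nat \<Rightarrow> 'a::comm_ring_1 mat) \<Rightarrow> 'a mat" where
  "kron_prod d B = foldr (\<lambda>k P. kron (B k) P) [0..<d] (1\<^sub>m 1)"

text \<open>An index i < n^d corresponds to the multi-index (digit n d 0 i, ..., digit n d (d-1) i)
  in [n]^d, consistently with the Kronecker product (factor 0 is most significant).\<close>
definition digit :: "nat \<Rightarrow> nat \<Rightarrow> nat \<Rightarrow> nat \<Rightarrow> nat" where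
  "digit n d k i = (i div n ^ (d - 1 - k)) mod n"

definition of_digits :: "nat \<Rightarrow> nat \<Rightarrow> (nat \<Rightarrow> nat) \<Rightarrow> nat" where
  "of_digits n d f = (\<Sum>k<d. f k * n ^ (d - 1 - k))"

text \<open>Partial transpose M^{T_kappa} of an n^d x n^d matrix: for each k in kappa, the k-th row
  digit is swapped with the k-th column digit (this is the composition of the single partial
  transposes over k in kappa, which commute).\<close>
definition ptrans :: "nat \<Rightarrow> nat \<Rightarrow> nat set \<Rightarrow> 'a mat \<Rightarrow> 'a mat" where
  "ptrans n d \<kappa> M = mat (n ^ d) (n ^ d) (\<lambda>(i, j).
     M $$ (of_digits n d (\<lambda>k. if k \<in> \<kappa> then digit n d k j else digit n d k i),
           of_digits n d (\<lambda>k. if k \<in> \<kappa> then digit n d k i else digit n d k j)))"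

end

(* Index the rows and columns of n^d x n^d matrices by multi-indices f, g in [n]^d. Then the
   Kronecker product of A_0, ..., A_(d-1) has entry prod_k A_k(f_k, g_k), and M^{T_kappa} has
   entry M(f', g'), where f' and g' arise from f and g by exchanging their kappa-coordinates.
   Expanding (kron A) M (kron C) as a sum over pairs (c, e) of multi-indices and performing the
   same exchange on the summation variables gives
     ((kron A) M (kron C))^{T_kappa} = (kron A') M^{T_kappa} (kron C'),
   with A'_k = C_k^T, C'_k = A_k^T for k in kappa and A'_k = A_k, C'_k = C_k otherwise.
   Taking C = I yields the identity. For invertible B_k both outer factors are Kronecker products
   of invertible matrices, hence invertible, so they do not change the rank. *)

theory Submission
  imports Defs
begin

section \<open>Digit expansions and multi-indices\<close>

abbreviation multi_indices :: "nat \<Rightarrow> nat \<Rightarrow> (nat \<Rightarrow> nat) set" where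
  "multi_indices n d \<equiv> \<Pi>\<^sub>E k\<in>{..<d}. {..<n}"

lemma multi_indices_less: "f \<in> multi_indices n d \<Longrightarrow> k < d \<Longrightarrow> f k < n"
  by auto

lemma of_digits_Suc: "of_digits n (Suc d) f = f 0 * n ^ d + of_digits n d (\<lambda>k. f (Suc k))"
  unfolding of_digits_def by (subst sum.lessThan_Suc_shift) simp

lemma of_digits_cong: "(\<And>k. k < d \<Longrightarrow> f k = g k) \<Longrightarrow> of_digits n d f = of_digits n d g"
  unfolding of_digits_def by (rule sum.cong) auto

lemma of_digits_less: "(\<And>k. k < d \<Longrightarrow> f k < n) \<Longrightarrow> of_digits n d f < n ^ d"
proof (induction d arbitrary: f)
  case 0
  then show ?case by (simp add: of_digits_def)
next
  case (Suc d)
  have "of_digits n (Suc d) f < f 0 * n ^ d + n ^ d"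
    using Suc.IH[of "\<lambda>k. f (Suc k)"] Suc.prems by (simp add: of_digits_Suc)
  also have "\<dots> \<le> n ^ Suc d"
    using Suc.prems[of 0] mult_le_mono1[of "Suc (f 0)" n "n ^ d"] by simp
  finally show ?case .
qed

lemma of_digits_multi_indices_less: "f \<in> multi_indices n d \<Longrightarrow> of_digits n d f < n ^ d"
  by (rule of_digits_less) auto

lemma digit_add_mult_power:
  assumes "k < d"
  shows "digit n d k (q * n ^ d + r) = digit n d k r"
proof (cases "n = 0")
  case True
  then show ?thesis using assms by (simp add: power_0_left)
next
  case False
  define p where "p = n ^ (d - 1 - k)"
  have "k + 1 + (d - 1 - k) = d"
    using assms by simp
  then have "q * n ^ d = (q * n ^ k) * n * p"
    unfolding p_def by (metis power_add power_one_right mult.assoc)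
  moreover have "p \<noteq> 0"
    using False by (simp add: p_def)
  ultimately have "(q * n ^ d + r) div p = (q * n ^ k) * n + r div p"
    by (metis add.commute div_mult_self1)
  then show ?thesis
    unfolding digit_def p_def[symmetric] by simp
qed

lemma digit_of_digits:
  "(\<And>k. k < d \<Longrightarrow> f k < n) \<Longrightarrow> k < d \<Longrightarrow> digit n d k (of_digits n d f) = f k"
proof (induction d arbitrary: f k)
  case 0
  then show ?case by simp
next
  case (Suc d)
  have low: "of_digits n d (\<lambda>k. f (Suc k)) < n ^ d"
    using Suc.prems(1) by (intro of_digits_less) simp
  show ?case
  proof (cases k)
    case 0
    then show ?thesis
      using low Suc.prems(1)[of 0] by (simp add: digit_def of_digits_Suc)
  next
    case (Suc k')
    then have "digit n (Suc d) k (of_digits n (Suc d) f) = digit n d k' (of_digits n (Suc d) f)"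
      by (simp add: digit_def)
    also have "\<dots> = f k"
      using Suc Suc.prems by (simp add: of_digits_Suc digit_add_mult_power Suc.IH)
    finally show ?thesis .
  qed
qed

lemma bij_betw_of_digits: "bij_betw (of_digits n d) (multi_indices n d) {..<n ^ d}"
proof -
  have inj: "inj_on (of_digits n d) (multi_indices n d)"
  proof (rule inj_onI)
    fix f g assume f: "f \<in> multi_indices n d" and g: "g \<in> multi_indices n d"
      and eq: "of_digits n d f = of_digits n d g"
    show "f = g"
      using digit_of_digits[of d f n] digit_of_digits[of d g n] f g eq
      by (intro PiE_ext[OF f g]) (metis PiE_mem lessThan_iff)
  qed
  moreover have "of_digits n d ` multi_indices n d \<subseteq> {..<n ^ d}"
    by (auto intro: of_digits_less)
  moreover have "card (of_digits n d ` multi_indices n d) = card {..<n ^ d}"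
    using inj by (simp add: card_image card_PiE)
  ultimately show ?thesis
    unfolding bij_betw_def by (simp add: card_subset_eq)
qed

lemma sum_lessThan_power_multi_indices:
  "(\<Sum>i<n ^ d. g i) = (\<Sum>f\<in>multi_indices n d. g (of_digits n d f))"
  using sum.reindex_bij_betw[OF bij_betw_of_digits, of g] by simp

lemma mat_eq_of_digitsI:
  assumes "A \<in> carrier_mat (n ^ d) (n ^ d)" and "B \<in> carrier_mat (n ^ d) (n ^ d)"
    and "\<And>f g. f \<in> multi_indices n d \<Longrightarrow> g \<in> multi_indices n d \<Longrightarrow>
           A $$ (of_digits n d f, of_digits n d g) = B $$ (of_digits n d f, of_digits n d g)"
  shows "A = B"
proof (rule eq_matI)
  fix i j assume "i < dim_row B" "j < dim_col B"
  then have "i \<in> of_digits n d ` multi_indices n d" "j \<in> of_digits n d ` multi_indices n d"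
    using assms(2) bij_betw_of_digits[of n d] by (auto simp: bij_betw_def)
  then show "A $$ (i, j) = B $$ (i, j)"
    using assms(3) by blast
qed (use assms(1,2) in auto)

section \<open>Kronecker products\<close>

lemma index_mult_mat_sum:
  "i < dim_row A \<Longrightarrow> j < dim_col B \<Longrightarrow> dim_col A = dim_row B \<Longrightarrow>
     (A * B) $$ (i, j) = (\<Sum>c<dim_row B. A $$ (i, c) * B $$ (c, j))"
  by (simp add: scalar_prod_def lessThan_atLeast0)

lemma index_mult_mat3_sum:
  assumes "A \<in> carrier_mat nr m" "M \<in> carrier_mat m p" "C \<in> carrier_mat p nc" "i < nr" "j < nc"
  shows "(A * M * C) $$ (i, j) = (\<Sum>c<m. \<Sum>e<p. A $$ (i, c) * M $$ (c, e) * C $$ (e, j))"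
proof -
  have "(A * M * C) $$ (i, j) = (\<Sum>e<p. (A * M) $$ (i, e) * C $$ (e, j))"
    using assms by (subst index_mult_mat_sum) auto
  also have "\<dots> = (\<Sum>e<p. (\<Sum>c<m. A $$ (i, c) * M $$ (c, e)) * C $$ (e, j))"
    using assms by (intro sum.cong refl) (subst index_mult_mat_sum, auto)
  finally show ?thesis
    by (simp add: sum_distrib_right sum.swap[of _ "{..<p}"])
qed

lemma kron_prod_Suc: "kron_prod (Suc d) A = kron (A 0) (kron_prod d (\<lambda>k. A (Suc k)))"
  unfolding kron_prod_def
  by (simp add: upt_conv_Cons map_Suc_upt[symmetric] foldr_map o_def del: upt_Suc)

lemma kron_prod_cong: "(\<And>k. k < d \<Longrightarrow> A k = A' k) \<Longrightarrow> kron_prod d A = kron_prod d A'"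
  unfolding kron_prod_def by (rule foldr_cong) auto

lemma kron_prod_carrier:
  "(\<And>k. k < d \<Longrightarrow> A k \<in> carrier_mat n n) \<Longrightarrow> kron_prod d A \<in> carrier_mat (n ^ d) (n ^ d)"
proof (induction d arbitrary: A)
  case 0
  then show ?case by (simp add: kron_prod_def)
next
  case (Suc d)
  have "kron_prod d (\<lambda>k. A (Suc k)) \<in> carrier_mat (n ^ d) (n ^ d)"
    using Suc.prems by (intro Suc.IH) simp
  then show ?case
    using Suc.prems[of 0] by (simp add: kron_prod_Suc kron_def)
qed

lemma kron_prod_index_of_digits:
  assumes "\<And>k. k < d \<Longrightarrow> A k \<in> carrier_mat n n"
    and "\<And>k. k < d \<Longrightarrow> f k < n" and "\<And>k. k < d \<Longrightarrow> g k < n"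
  shows "kron_prod d A $$ (of_digits n d f, of_digits n d g) = (\<Prod>k<d. A k $$ (f k, g k))"
  using assms
proof (induction d arbitrary: A f g)
  case 0
  then show ?case by (simp add: kron_prod_def of_digits_def)
next
  case (Suc d)
  let ?P = "kron_prod d (\<lambda>k. A (Suc k))"
  let ?f = "of_digits n d (\<lambda>k. f (Suc k))" and ?g = "of_digits n d (\<lambda>k. g (Suc k))"
  have P: "?P \<in> carrier_mat (n ^ d) (n ^ d)"
    using Suc.prems(1) by (intro kron_prod_carrier) simp
  have low: "?f < n ^ d" "?g < n ^ d"
    using Suc.prems(2,3) by (simp_all add: of_digits_less)
  have high: "f 0 < n" "g 0 < n" "A 0 \<in> carrier_mat n n"
    using Suc.prems by simp_all
  have "(f 0 * n ^ d + ?f) div n ^ d = f 0" "(f 0 * n ^ d + ?f) mod n ^ d = ?f"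
    "(g 0 * n ^ d + ?g) div n ^ d = g 0" "(g 0 * n ^ d + ?g) mod n ^ d = ?g"
    using low by (auto simp: div_add1_eq power_0_left)
  moreover have "of_digits n (Suc d) f < n ^ Suc d" "of_digits n (Suc d) g < n ^ Suc d"
    using Suc.prems(2,3) by (simp_all only: of_digits_less)
  ultimately have "kron_prod (Suc d) A $$ (of_digits n (Suc d) f, of_digits n (Suc d) g)
      = A 0 $$ (f 0, g 0) * ?P $$ (?f, ?g)"
    using P high by (simp add: kron_prod_Suc kron_def of_digits_Suc)
  also have "\<dots> = (\<Prod>k<Suc d. A k $$ (f k, g k))"
    using Suc.prems by (subst prod.lessThan_Suc_shift) (simp add: Suc.IH)
  finally show ?case .
qed

lemma kron_prod_mult:
  assumes A: "\<And>k. k < d \<Longrightarrow> A k \<in> carrier_mat n n"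
    and C: "\<And>k. k < d \<Longrightarrow> C k \<in> carrier_mat n n"
  shows "kron_prod d A * kron_prod d C = kron_prod d (\<lambda>k. A k * C k)"
proof (rule mat_eq_of_digitsI)
  have AC: "\<And>k. k < d \<Longrightarrow> A k * C k \<in> carrier_mat n n"
    using A C by (meson mult_carrier_mat)
  then show "kron_prod d (\<lambda>k. A k * C k) \<in> carrier_mat (n ^ d) (n ^ d)"
    by (rule kron_prod_carrier)
  have KA: "kron_prod d A \<in> carrier_mat (n ^ d) (n ^ d)"
    and KC: "kron_prod d C \<in> carrier_mat (n ^ d) (n ^ d)"
    using A C by (simp_all add: kron_prod_carrier)
  then show "kron_prod d A * kron_prod d C \<in> carrier_mat (n ^ d) (n ^ d)"
    by simp
  fix f g assume f: "f \<in> multi_indices n d" and g: "g \<in> multi_indices n d"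
  note f_less = multi_indices_less[OF f] and g_less = multi_indices_less[OF g]
  have "(kron_prod d A * kron_prod d C) $$ (of_digits n d f, of_digits n d g)
      = (\<Sum>c<n ^ d. kron_prod d A $$ (of_digits n d f, c) * kron_prod d C $$ (c, of_digits n d g))"
    using KA KC of_digits_multi_indices_less[OF f] of_digits_multi_indices_less[OF g]
    by (subst index_mult_mat_sum) auto
  also have "\<dots> = (\<Sum>h\<in>multi_indices n d. \<Prod>k<d. A k $$ (f k, h k) * C k $$ (h k, g k))"
    unfolding sum_lessThan_power_multi_indices
  proof (rule sum.cong)
    fix h assume "h \<in> multi_indices n d"
    note h_less = multi_indices_less[OF this]
    show "kron_prod d A $$ (of_digits n d f, of_digits n d h) * kron_prod d C $$ (of_digits n d h, of_digits n d g)
        = (\<Prod>k<d. A k $$ (f k, h k) * C k $$ (h k, g k))"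
      by (simp add: kron_prod_index_of_digits[OF A f_less h_less]
          kron_prod_index_of_digits[OF C h_less g_less] prod.distrib)
  qed simp
  also have "\<dots> = (\<Prod>k<d. \<Sum>x<n. A k $$ (f k, x) * C k $$ (x, g k))"
    by (rule prod_sum_PiE[symmetric]) auto
  also have "\<dots> = (\<Prod>k<d. (A k * C k) $$ (f k, g k))"
  proof (rule prod.cong)
    fix k assume "k \<in> {..<d}"
    then show "(\<Sum>x<n. A k $$ (f k, x) * C k $$ (x, g k)) = (A k * C k) $$ (f k, g k)"
      using A[of k] C[of k] f_less[of k] g_less[of k] by (subst index_mult_mat_sum) auto
  qed simp
  also have "\<dots> = kron_prod d (\<lambda>k. A k * C k) $$ (of_digits n d f, of_digits n d g)"
    by (simp add: kron_prod_index_of_digits[OF AC f_less g_less])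
  finally show "(kron_prod d A * kron_prod d C) $$ (of_digits n d f, of_digits n d g)
      = kron_prod d (\<lambda>k. A k * C k) $$ (of_digits n d f, of_digits n d g)" .
qed

lemma kron_prod_one: "kron_prod d (\<lambda>_. 1\<^sub>m n) = (1\<^sub>m (n ^ d) :: 'a::comm_ring_1 mat)"
proof (rule mat_eq_of_digitsI)
  show "kron_prod d (\<lambda>_. 1\<^sub>m n) \<in> carrier_mat (n ^ d) (n ^ d)"
    by (simp add: kron_prod_carrier)
  fix f g assume f: "f \<in> multi_indices n d" and g: "g \<in> multi_indices n d"
  note f_less = multi_indices_less[OF f] and g_less = multi_indices_less[OF g]
  have "kron_prod d (\<lambda>_. 1\<^sub>m n) $$ (of_digits n d f, of_digits n d g)
      = (\<Prod>k<d. (1\<^sub>m n :: 'a mat) $$ (f k, g k))"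
    by (rule kron_prod_index_of_digits[OF _ f_less g_less]) simp
  also have "\<dots> = (if f = g then 1 else 0)"
  proof (cases "f = g")
    case False
    then obtain k where "k < d" "f k \<noteq> g k"
      using PiE_ext[OF f g] by auto
    then have "(\<Prod>k<d. (1\<^sub>m n :: 'a mat) $$ (f k, g k)) = 0"
      using f_less g_less by (intro prod_zero) auto
    then show ?thesis
      using False by simp
  qed (auto intro: prod.neutral simp: g_less)
  also have "\<dots> = (1\<^sub>m (n ^ d) :: 'a mat) $$ (of_digits n d f, of_digits n d g)"
    using f g bij_betw_of_digits[of n d] of_digits_multi_indices_less[OF f]
      of_digits_multi_indices_less[OF g]
    by (auto simp: bij_betw_def inj_on_eq_iff)
  finally show "kron_prod d (\<lambda>_. 1\<^sub>m n) $$ (of_digits n d f, of_digits n d g)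
      = (1\<^sub>m (n ^ d) :: 'a mat) $$ (of_digits n d f, of_digits n d g)" .
qed simp

lemma index_kron_prod_mult_kron_prod:
  assumes A: "\<And>k. k < d \<Longrightarrow> A k \<in> carrier_mat n n"
    and C: "\<And>k. k < d \<Longrightarrow> C k \<in> carrier_mat n n"
    and M: "M \<in> carrier_mat (n ^ d) (n ^ d)"
    and f: "f \<in> multi_indices n d" and g: "g \<in> multi_indices n d"
  shows "(kron_prod d A * M * kron_prod d C) $$ (of_digits n d f, of_digits n d g)
    = (\<Sum>(c, e)\<in>multi_indices n d \<times> multi_indices n d.
         (\<Prod>k<d. A k $$ (f k, c k) * C k $$ (e k, g k)) * M $$ (of_digits n d c, of_digits n d e))"
proof -
  note less = multi_indices_less
  have "(kron_prod d A * M * kron_prod d C) $$ (of_digits n d f, of_digits n d g)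
    = (\<Sum>c<n ^ d. \<Sum>e<n ^ d.
         kron_prod d A $$ (of_digits n d f, c) * M $$ (c, e) * kron_prod d C $$ (e, of_digits n d g))"
    by (rule index_mult_mat3_sum[OF kron_prod_carrier[OF A] M kron_prod_carrier[OF C]
          of_digits_multi_indices_less[OF f] of_digits_multi_indices_less[OF g]])
  also have "\<dots> = (\<Sum>c\<in>multi_indices n d. \<Sum>e\<in>multi_indices n d.
         kron_prod d A $$ (of_digits n d f, of_digits n d c) * M $$ (of_digits n d c, of_digits n d e)
           * kron_prod d C $$ (of_digits n d e, of_digits n d g))"
    by (simp add: sum_lessThan_power_multi_indices)
  also have "\<dots> = (\<Sum>c\<in>multi_indices n d. \<Sum>e\<in>multi_indices n d.
         (\<Prod>k<d. A k $$ (f k, c k) * C k $$ (e k, g k)) * M $$ (of_digits n d c, of_digits n d e))"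
    using less[OF f] less[OF g]
    by (intro sum.cong refl)
      (simp add: kron_prod_index_of_digits[OF A] kron_prod_index_of_digits[OF C] less prod.distrib)
  finally show ?thesis
    by (simp add: sum.cartesian_product)
qed

section \<open>Partial transposes\<close>

lemma override_on_PiE: "f \<in> Pi\<^sub>E I S \<Longrightarrow> g \<in> Pi\<^sub>E I S \<Longrightarrow> override_on f g K \<in> Pi\<^sub>E I S"
  by (auto simp: PiE_iff override_on_def extensional_def)

lemma sum_override_on_swap:
  fixes h :: "('i \<Rightarrow> 'a) \<Rightarrow> ('i \<Rightarrow> 'a) \<Rightarrow> 'b::comm_monoid_add"
  assumes "\<And>f g. f \<in> S \<Longrightarrow> g \<in> S \<Longrightarrow> override_on f g K \<in> S"
  shows "(\<Sum>(f, g)\<in>S \<times> S. h (override_on f g K) (override_on g f K)) = (\<Sum>(c, e)\<in>S \<times> S. h c e)"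
proof -
  define swap :: "('i \<Rightarrow> 'a) \<times> ('i \<Rightarrow> 'a) \<Rightarrow> ('i \<Rightarrow> 'a) \<times> ('i \<Rightarrow> 'a)"
    where "swap = (\<lambda>(f, g). (override_on f g K, override_on g f K))"
  have "swap (swap p) = p" for p
    by (auto simp: swap_def override_on_def fun_eq_iff split: prod.splits)
  moreover have "swap p \<in> S \<times> S" if "p \<in> S \<times> S" for p
    using that assms by (auto simp: swap_def)
  ultimately have "(\<Sum>p\<in>S \<times> S. case_prod h p) = (\<Sum>p\<in>S \<times> S. case_prod h (swap p))"
    by (intro sum.reindex_bij_witness[of _ swap swap]) auto
  then show ?thesis
    by (simp add: swap_def case_prod_beta')
qed

lemma ptrans_carrier: "ptrans n d \<kappa> M \<in> carrier_mat (n ^ d) (n ^ d)"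
  unfolding ptrans_def by simp

lemma ptrans_index_of_digits:
  assumes f: "f \<in> multi_indices n d" and g: "g \<in> multi_indices n d"
  shows "ptrans n d \<kappa> M $$ (of_digits n d f, of_digits n d g)
    = M $$ (of_digits n d (override_on f g \<kappa>), of_digits n d (override_on g f \<kappa>))"
proof -
  have "digit n d k (of_digits n d f) = f k" "digit n d k (of_digits n d g) = g k" if "k < d" for k
    using that multi_indices_less[OF f] multi_indices_less[OF g] by (simp_all add: digit_of_digits)
  then show ?thesis
    using of_digits_multi_indices_less[OF f] of_digits_multi_indices_less[OF g]
    unfolding ptrans_def by (auto intro!: arg_cong2[where f = "\<lambda>i j. M $$ (i, j)"] of_digits_cong)
qed

lemma ptrans_kron_prod_mult:
  fixes A C :: "nat \<Rightarrow> 'a::comm_ring_1 mat"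
  assumes A: "\<And>k. k < d \<Longrightarrow> A k \<in> carrier_mat n n"
    and C: "\<And>k. k < d \<Longrightarrow> C k \<in> carrier_mat n n"
    and M: "M \<in> carrier_mat (n ^ d) (n ^ d)"
  shows "ptrans n d \<kappa> (kron_prod d A * M * kron_prod d C)
    = kron_prod d (\<lambda>k. if k \<in> \<kappa> then transpose_mat (C k) else A k) * ptrans n d \<kappa> M
        * kron_prod d (\<lambda>k. if k \<in> \<kappa> then transpose_mat (A k) else C k)"
    (is "_ = kron_prod d ?A' * _ * kron_prod d ?C'")
proof (rule mat_eq_of_digitsI)
  have A': "\<And>k. k < d \<Longrightarrow> ?A' k \<in> carrier_mat n n" and C': "\<And>k. k < d \<Longrightarrow> ?C' k \<in> carrier_mat n n"
    using A C by auto
  then show "kron_prod d ?A' * ptrans n d \<kappa> M * kron_prod d ?C' \<in> carrier_mat (n ^ d) (n ^ d)"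
    using kron_prod_carrier[OF A'] kron_prod_carrier[OF C'] ptrans_carrier[of n d \<kappa> M]
    by (meson mult_carrier_mat)
  show "ptrans n d \<kappa> (kron_prod d A * M * kron_prod d C) \<in> carrier_mat (n ^ d) (n ^ d)"
    by (rule ptrans_carrier)
  fix x y assume x: "x \<in> multi_indices n d" and y: "y \<in> multi_indices n d"
  let ?I = "multi_indices n d"
  let ?od = "of_digits n d"
  define summand where "summand = (\<lambda>c e. (\<Prod>k<d. A k $$ (override_on x y \<kappa> k, c k)
    * C k $$ (e k, override_on y x \<kappa> k)) * M $$ (?od c, ?od e))"
  have "ptrans n d \<kappa> (kron_prod d A * M * kron_prod d C) $$ (?od x, ?od y)
      = (\<Sum>(c, e)\<in>?I \<times> ?I. summand c e)"
    unfolding summand_def using x y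
    by (simp add: ptrans_index_of_digits index_kron_prod_mult_kron_prod[OF A C M] override_on_PiE)
  also have "\<dots> = (\<Sum>(f, g)\<in>?I \<times> ?I. summand (override_on f g \<kappa>) (override_on g f \<kappa>))"
    by (rule sum_override_on_swap[symmetric]) (rule override_on_PiE)
  also have "\<dots> = (\<Sum>(f, g)\<in>?I \<times> ?I. (\<Prod>k<d. ?A' k $$ (x k, f k) * ?C' k $$ (g k, y k))
      * ptrans n d \<kappa> M $$ (?od f, ?od g))"
  proof (rule sum.cong[OF refl], clarify)
    fix f g assume f: "f \<in> ?I" and g: "g \<in> ?I"
    have "A k $$ (override_on x y \<kappa> k, override_on f g \<kappa> k) * C k $$ (override_on g f \<kappa> k, override_on y x \<kappa> k)
        = ?A' k $$ (x k, f k) * ?C' k $$ (g k, y k)" if "k < d" for k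
      using A[OF that] C[OF that] multi_indices_less[OF x that] multi_indices_less[OF y that]
        multi_indices_less[OF f that] multi_indices_less[OF g that]
      by (cases "k \<in> \<kappa>") (auto simp: ac_simps)
    then show "summand (override_on f g \<kappa>) (override_on g f \<kappa>)
      = (\<Prod>k<d. ?A' k $$ (x k, f k) * ?C' k $$ (g k, y k)) * ptrans n d \<kappa> M $$ (?od f, ?od g)"
      unfolding summand_def by (simp add: ptrans_index_of_digits[OF f g])
  qed
  also have "\<dots> = (kron_prod d ?A' * ptrans n d \<kappa> M * kron_prod d ?C') $$ (?od x, ?od y)"
    by (rule index_kron_prod_mult_kron_prod[OF A' C' ptrans_carrier x y, symmetric])
  finally show "ptrans n d \<kappa> (kron_prod d A * M * kron_prod d C) $$ (?od x, ?od y)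
      = (kron_prod d ?A' * ptrans n d \<kappa> M * kron_prod d ?C') $$ (?od x, ?od y)" .
qed

section \<open>Invertibility and rank\<close>

lemma invertible_mat_iff_right_inverse:
  fixes A :: "'a::field mat"
  assumes A: "A \<in> carrier_mat n n"
  shows "invertible_mat A \<longleftrightarrow> (\<exists>B\<in>carrier_mat n n. A * B = 1\<^sub>m n)"
proof
  assume "invertible_mat A"
  then obtain B where AB: "A * B = 1\<^sub>m n" and BA: "B * A = 1\<^sub>m (dim_row B)"
    using A unfolding invertible_mat_def inverts_mat_def by auto
  have "B \<in> carrier_mat n n"
    using arg_cong[OF AB, of dim_col] arg_cong[OF BA, of dim_col] A by auto
  then show "\<exists>B\<in>carrier_mat n n. A * B = 1\<^sub>m n"
    using AB by blast
next
  assume "\<exists>B\<in>carrier_mat n n. A * B = 1\<^sub>m n"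
  then obtain B where B: "B \<in> carrier_mat n n" and AB: "A * B = 1\<^sub>m n"
    by blast
  then have "B * A = 1\<^sub>m n"
    by (rule mat_mult_left_right_inverse[OF A])
  then show "invertible_mat A"
    using A B AB unfolding invertible_mat_def inverts_mat_def by auto
qed

lemma invertible_mat_one: "invertible_mat (1\<^sub>m n :: 'a::field mat)"
proof -
  have "1\<^sub>m n * 1\<^sub>m n = (1\<^sub>m n :: 'a mat)"
    by simp
  then show ?thesis
    using invertible_mat_iff_right_inverse[OF one_carrier_mat] one_carrier_mat by blast
qed

lemma invertible_mat_transpose:
  fixes A :: "'a::field mat"
  assumes A: "A \<in> carrier_mat n n" and inv: "invertible_mat A"
  shows "invertible_mat (transpose_mat A)"
proof -
  obtain B where B: "B \<in> carrier_mat n n" and AB: "A * B = 1\<^sub>m n"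
    using inv invertible_mat_iff_right_inverse[OF A] by blast
  have "transpose_mat A * transpose_mat B = transpose_mat (B * A)"
    using A B by (simp add: transpose_mult)
  also have "\<dots> = 1\<^sub>m n"
    using mat_mult_left_right_inverse[OF A B AB] by simp
  finally show ?thesis
    using B A invertible_mat_iff_right_inverse[of "transpose_mat A" n] by auto
qed

lemma invertible_mat_kron_prod:
  fixes A :: "nat \<Rightarrow> 'a::field mat"
  assumes A: "\<And>k. k < d \<Longrightarrow> A k \<in> carrier_mat n n"
    and inv: "\<And>k. k < d \<Longrightarrow> invertible_mat (A k)"
  shows "invertible_mat (kron_prod d A)"
proof -
  have "\<exists>B. B \<in> carrier_mat n n \<and> A k * B = 1\<^sub>m n" if "k < d" for k
    using inv[OF that] invertible_mat_iff_right_inverse[OF A[OF that]] by blast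
  then obtain B where B: "\<And>k. k < d \<Longrightarrow> B k \<in> carrier_mat n n \<and> A k * B k = 1\<^sub>m n"
    by metis
  have KB: "kron_prod d B \<in> carrier_mat (n ^ d) (n ^ d)"
    by (rule kron_prod_carrier) (use B in blast)
  have "kron_prod d A * kron_prod d B = kron_prod d (\<lambda>k. A k * B k)"
    by (rule kron_prod_mult) (use A B in blast)+
  also have "\<dots> = kron_prod d (\<lambda>_. 1\<^sub>m n)"
    using B by (intro kron_prod_cong) blast
  also have "\<dots> = 1\<^sub>m (n ^ d)"
    by (rule kron_prod_one)
  finally have "kron_prod d A * kron_prod d B = 1\<^sub>m (n ^ d)" .
  moreover have "kron_prod d A \<in> carrier_mat (n ^ d) (n ^ d)"
    by (rule kron_prod_carrier) (rule A)
  ultimately show ?thesis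
    using KB invertible_mat_iff_right_inverse by blast
qed

context vec_space
begin

lemma rank_col_space: "rank A = vectorspace.dim class_ring (vs (col_space A))"
  unfolding rank_def col_space_def by simp

lemma rank_mult_invertible_right:
  assumes X: "X \<in> carrier_mat n m" and R: "R \<in> carrier_mat m m" and inv: "invertible_mat R"
  shows "rank (X * R) = rank X"
proof -
  have "col_space (X * R) = row_space (transpose_mat R * transpose_mat X)"
    using X R by (simp add: col_space_eq_row_space_transpose transpose_mult)
  also have "\<dots> = col_space X"
    using X R invertible_mat_transpose[OF R inv]
    by (simp add: row_space_is_preserved col_space_eq_row_space_transpose)
  finally show ?thesis
    by (simp add: rank_col_space)
qed

lemma col_space_mult:
  assumes L: "L \<in> carrier_mat n n" and X: "X \<in> carrier_mat n m"
  shows "col_space (L * X) = (\<lambda>v. L *\<^sub>v v) ` col_space X"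
proof -
  have assoc: "(L * X) *\<^sub>v x = L *\<^sub>v (X *\<^sub>v x)" if "x \<in> carrier_vec m" for x
    using L X that by (simp add: assoc_mult_mat_vec)
  have "L * X \<in> carrier_mat n m"
    using L X by simp
  then show ?thesis
    unfolding col_space_eq[OF X] col_space_eq[OF \<open>L * X \<in> carrier_mat n m\<close>]
    using L X by (auto simp: assoc)
qed

lemma mult_mat_vec_linear_map_col_space:
  assumes L: "L \<in> carrier_mat n n" and X: "X \<in> carrier_mat n m"
  shows "linear_map class_ring (vs (col_space X)) (vs (col_space (L * X))) (\<lambda>v. L *\<^sub>v v)"
proof -
  have vs: "vectorspace class_ring (vs (col_space A))" if "A \<in> carrier_mat n m" for A
    unfolding col_space_def using that cols_dim[of A]
    by (intro subspace_is_vs span_is_subspace) auto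
  have sub: "col_space X \<subseteq> carrier_vec n"
    using X by (auto simp: col_space_eq)
  have add: "L *\<^sub>v (v + w) = L *\<^sub>v v + L *\<^sub>v w" if "v \<in> col_space X" "w \<in> col_space X" for v w
    using that sub L by (auto intro: mult_add_distrib_mat_vec)
  show ?thesis
    unfolding linear_map_def mod_hom_def mod_hom_axioms_def LinearCombinations.module_hom_def
    using vs[OF X] vs[of "L * X"] L X sub col_space_mult[OF L X]
    by (auto simp: vectorspace_def add mult_mat_vec)
qed

lemma rank_mult_invertible_left:
  assumes L: "L \<in> carrier_mat n n" and X: "X \<in> carrier_mat n m" and inv: "invertible_mat L"
  shows "rank (L * X) = rank X"
proof -
  obtain L' where L': "L' \<in> carrier_mat n n" and "L * L' = 1\<^sub>m n"
    using L inv by (auto simp: invertible_mat_iff_right_inverse)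
  then have L'L: "L' * L = 1\<^sub>m n"
    by (rule mat_mult_left_right_inverse[OF L])
  have sub: "col_space X \<subseteq> carrier_vec n"
    using X by (auto simp: col_space_eq)
  have "inj_on (\<lambda>v. L *\<^sub>v v) (col_space X)"
  proof (rule inj_on_inverseI)
    fix v assume "v \<in> col_space X"
    then show "L' *\<^sub>v (L *\<^sub>v v) = v"
      using sub L L' L'L by (auto simp: assoc_mult_mat_vec[symmetric])
  qed
  then have "vectorspace.dim class_ring (vs (col_space X)) = vectorspace.dim class_ring (vs (col_space (L * X)))"
    using linear_map.dim_eq[OF mult_mat_vec_linear_map_col_space[OF L X]] fin_dim_span_cols[OF X]
      col_space_mult[OF L X]
    by (simp add: col_space_def)
  then show ?thesis
    by (simp add: rank_col_space)
qed

lemma rank_mult_invertible_left_right: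
  assumes L: "L \<in> carrier_mat n n" and X: "X \<in> carrier_mat n m" and R: "R \<in> carrier_mat m m"
    and "invertible_mat L" and "invertible_mat R"
  shows "rank (L * X * R) = rank X"
proof -
  have "rank (L * X * R) = rank (L * X)"
    using assms by (intro rank_mult_invertible_right[of "L * X"]) auto
  also have "\<dots> = rank X"
    using assms by (intro rank_mult_invertible_left)
  finally show ?thesis .
qed

end

theorem lemma3p9:
  fixes n d :: nat and B :: "nat \<Rightarrow> 'a::field mat" and M :: "'a mat" and \<kappa> :: "nat set"
  assumes B: "\<And>k. k < d \<Longrightarrow> B k \<in> carrier_mat n n"
    and M: "M \<in> carrier_mat (n ^ d) (n ^ d)"
    and \<kappa>: "\<kappa> \<subseteq> {0..<d}"
  shows "ptrans n d \<kappa> (kron_prod d B * M) =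
           kron_prod d (\<lambda>k. if k \<in> \<kappa> then 1\<^sub>m n else B k) * ptrans n d \<kappa> M
             * kron_prod d (\<lambda>k. if k \<in> \<kappa> then transpose_mat (B k) else 1\<^sub>m n)
         \<and> ((\<forall>k<d. invertible_mat (B k)) \<longrightarrow>
           vec_space.rank (n ^ d) (ptrans n d \<kappa> (kron_prod d B * M)) =
           vec_space.rank (n ^ d) (ptrans n d \<kappa> M))"
proof -
  let ?L = "kron_prod d (\<lambda>k. if k \<in> \<kappa> then 1\<^sub>m n else B k)"
  let ?R = "kron_prod d (\<lambda>k. if k \<in> \<kappa> then transpose_mat (B k) else 1\<^sub>m n)"
  have "kron_prod d B * M = kron_prod d B * M * kron_prod d (\<lambda>_. 1\<^sub>m n)"
    using B M by (simp add: kron_prod_one kron_prod_carrier)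
  then have "ptrans n d \<kappa> (kron_prod d B * M) = ?L * ptrans n d \<kappa> M * ?R"
    using ptrans_kron_prod_mult[where A = B and C = "\<lambda>_. 1\<^sub>m n" and \<kappa> = \<kappa>, OF B _ M]
    by (simp cong: if_cong)
  moreover have
    "vec_space.rank (n ^ d) (?L * ptrans n d \<kappa> M * ?R) = vec_space.rank (n ^ d) (ptrans n d \<kappa> M)"
    if inv: "\<forall>k<d. invertible_mat (B k)"
  proof (rule vec_space.rank_mult_invertible_left_right)
    show "?L \<in> carrier_mat (n ^ d) (n ^ d)" "?R \<in> carrier_mat (n ^ d) (n ^ d)"
      using B by (auto intro!: kron_prod_carrier)
    show "ptrans n d \<kappa> M \<in> carrier_mat (n ^ d) (n ^ d)"
      by (rule ptrans_carrier)
    show "invertible_mat ?L"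
      by (rule invertible_mat_kron_prod[where n = n]) (use B inv invertible_mat_one in auto)
    show "invertible_mat ?R"
      by (rule invertible_mat_kron_prod[where n = n])
        (use B inv invertible_mat_one in \<open>auto intro: invertible_mat_transpose\<close>)
  qed
  ultimately show ?thesis
    by simp
qed

end
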